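(* Let $G=(V,E)$ with weight $\mu$ be an infinite, connected, locally finite weighted graph satisfying condition $(p_0)$, let $m>1$, and fix $o\in V$. Let $(p,q)\in G_4=\{(p,q): p<0,\ q=m-1\}$. Suppose there exist constants $\alpha>0$, $C>0$ and $n_1$ such that $$W_o(n)\le C\, n^{\alpha}\quad\text{for all } n\ge n_1.$$ Then the inequality $\Delta_m u+u^p|\nabla u|^q\le 0$ on $V$ admits no nontrivial positive solution.
   Context: Setting: $G=(V,E)$ is an infinite, connected, locally finite graph with no loops and no multiple edges; $x\sim y$ means $x$ and $y$ are joined by an edge. A weight is a symmetric function $\mu:V\times V\to[0,\infty)$ with $\mu_{xy}=\mu_{yx}>0$ if and only if $x\sim y$; the vertex measure is $\mu(x)=\sum_{y\sim x}\mu_{xy}$. For $m>1$ and $u:V\to\mathbb R$, $\Delta_m u(x)=\frac{1}{\mu(x)}\sum_{y\sim x}\mu_{xy}|u(y)-u(x)|^{m-2}(u(y)-u(x))$ and $|\nabla u(x)|=\big(\sum_{y\sim x}\frac{\mu_{xy}}{2\mu(x)}(u(y)-u(x))^2\big)^{1/2}$. Condition $(p_0)$: there is a constant $p_0>1$ such that $\mu_{xy}/\mu(x)\ge 1/p_0$ for all $x\sim y$. $d(x,y)$ is the graph (shortest path) distance, $B(o,n)=\{x\in V: d(o,x)\le n\}$, and $W_o(n)=\sum_{x\in B(o,n),\,y\in V,\,d(o,x)<d(o,y)}\mu_{xy}$. A nontrivial positive solution of $\Delta_m u+u^p|\nabla u|^q\le 0$ is a non-constant function $u:V\to(0,\infty)$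 such that $\Delta_m u(x)+u(x)^p|\nabla u(x)|^q\le 0$ for every $x\in V$, with the conventions $0^0=1$, $0^q=0$ for $q>0$, and, for $q<0$, $|\nabla u(x)|^q=+\infty$ when $|\nabla u(x)|=0$ (so the inequality fails at such $x$). *)

theory Defs
  imports Complex_Main
begin

text \<open>A weighted graph on vertex type 'v (the vertex set V is UNIV).
  adj is the edge relation, mu the weight.\<close>

definition weighted_graph :: "('v \<Rightarrow> 'v \<Rightarrow> bool) \<Rightarrow> ('v \<Rightarrow> 'v \<Rightarrow> real) \<Rightarrow> bool" where
  "weighted_graph adj mu \<longleftrightarrow>
     infinite (UNIV :: 'v set)
   \<and> (\<forall>x. \<not> adj x x)
   \<and> (\<forall>x y. adj x y \<longleftrightarrow> adj y x)
   \<and> (\<forall>x. finite {y. adj x y})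
   \<and> (\<forall>x y. \<exists>n. (adj ^^ n) x y)
   \<and> (\<forall>x y. mu x y = mu y x)
   \<and> (\<forall>x y. mu x y \<ge> 0)
   \<and> (\<forall>x y. mu x y > 0 \<longleftrightarrow> adj x y)"

definition vmeasure :: "('v \<Rightarrow> 'v \<Rightarrow> bool) \<Rightarrow> ('v \<Rightarrow> 'v \<Rightarrow> real) \<Rightarrow> 'v \<Rightarrow> real" where
  "vmeasure adj mu x = (\<Sum>y\<in>{y. adj x y}. mu x y)"

definition cond_p0 :: "('v \<Rightarrow> 'v \<Rightarrow> bool) \<Rightarrow> ('v \<Rightarrow> 'v \<Rightarrow> real) \<Rightarrow> real \<Rightarrow> bool" where
  "cond_p0 adj mu p0 \<longleftrightarrow> p0 > 1 \<and> (\<forall>x y. adj x y \<longrightarrow> mu x y / vmeasure adj mu x \<ge> 1 / p0)"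

definition gdist :: "('v \<Rightarrow> 'v \<Rightarrow> bool) \<Rightarrow> 'v \<Rightarrow> 'v \<Rightarrow> nat" where
  "gdist adj x y = (LEAST n. (adj ^^ n) x y)"

definition ball_g :: "('v \<Rightarrow> 'v \<Rightarrow> bool) \<Rightarrow> 'v \<Rightarrow> nat \<Rightarrow> 'v set" where
  "ball_g adj o' n = {x. gdist adj o' x \<le> n}"

text \<open>W_o(n); only neighbours y contribute since mu x y = 0 otherwise.\<close>
definition W_o :: "('v \<Rightarrow> 'v \<Rightarrow> bool) \<Rightarrow> ('v \<Rightarrow> 'v \<Rightarrow> real) \<Rightarrow> 'v \<Rightarrow> nat \<Rightarrow> real" where
  "W_o adj mu o' n = (\<Sum>x\<in>ball_g adj o' n.
       \<Sum>y\<in>{y. adj x y \<and> gdist adj o' x < gdist adj o' y}. mu x y)"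

definition m_laplacian :: "('v \<Rightarrow> 'v \<Rightarrow> bool) \<Rightarrow> ('v \<Rightarrow> 'v \<Rightarrow> real) \<Rightarrow> real \<Rightarrow> ('v \<Rightarrow> real) \<Rightarrow> 'v \<Rightarrow> real" where
  "m_laplacian adj mu m u x = (1 / vmeasure adj mu x) *
     (\<Sum>y\<in>{y. adj x y}. mu x y * \<bar>u y - u x\<bar> powr (m - 2) * (u y - u x))"

definition grad_norm :: "('v \<Rightarrow> 'v \<Rightarrow> bool) \<Rightarrow> ('v \<Rightarrow> 'v \<Rightarrow> real) \<Rightarrow> ('v \<Rightarrow> real) \<Rightarrow> 'v \<Rightarrow> real" where
  "grad_norm adj mu u x = sqrt (\<Sum>y\<in>{y. adj x y}. mu x y / (2 * vmeasure adj mu x) * (u y - u x)\<^sup>2)"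

text \<open>Nontrivial positive solution of Delta_m u + u^p |grad u|^q <= 0, with conventions
  0^0 = 1, 0^q = 0 for q > 0, and failure where the gradient vanishes if q < 0.\<close>
definition nontrivial_pos_solution ::
  "('v \<Rightarrow> 'v \<Rightarrow> bool) \<Rightarrow> ('v \<Rightarrow> 'v \<Rightarrow> real) \<Rightarrow> real \<Rightarrow> real \<Rightarrow> real \<Rightarrow> ('v \<Rightarrow> real) \<Rightarrow> bool" where
  "nontrivial_pos_solution adj mu m p q u \<longleftrightarrow>
     (\<forall>x. u x > 0) \<and> (\<exists>x y. u x \<noteq> u y) \<and>
     (\<forall>x. let g = grad_norm adj mu u x in
        \<not> (q < 0 \<and> g = 0) \<and>
        m_laplacian adj mu m u x + u x powr p * (if g = 0 then (if q = 0 then 1 else 0) else g powr q) \<le> 0)"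

end

theory Submission
  imports Defs "HOL-Real_Asymp.Real_Asymp"
begin

(* Truncating a nonconstant positive solution u at M = max (u a) (u b), where u a and u b differ,
   gives a bounded nonconstant v = min u M with
     \<Sum>y. mu x y |v y - v x|^(m-2) (v y - v x)  \<le>  -c \<Sum>y. mu x y |v y - v x|^(m-1)
   for some 0 < c < 1.  Where u \<le> M this holds because u^p \<ge> M^p (as p < 0) and (p_0) bounds every
   |u y - u x| by a multiple of |\<nabla>u(x)|, so the term u^p |\<nabla>u|^(m-1) dominates the (m-1)-energy of v
   at x; where u > M, v is at its maximum.
   Summing over the ball B(n), the antisymmetric fluxes between vertices of the ball cancel, so
   c A(n) is at most the energy on the edges leaving B(n), where A(n) is the (m-1)-energy of v in B(n).
   That boundary energy is at most A(n+1) - A(n), forcing A to grow geometrically, and at most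
   M^(m-1) W_o(n), which grows polynomially: a contradiction. *)

lemma weighted_graphD:
  assumes "weighted_graph adj mu"
  shows "finite {y. adj x y}" and "\<exists>n. (adj ^^ n) x y"
    and "mu x y = mu y x" and "mu x y \<ge> 0" and "mu x y > 0 \<longleftrightarrow> adj x y"
  using assms unfolding weighted_graph_def by blast+

lemma weighted_graph_mu_eq_0:
  assumes "weighted_graph adj mu" and "\<not> adj x y"
  shows "mu x y = 0"
  using weighted_graphD(4,5)[OF assms(1), of x y] assms(2) by linarith

lemma weighted_graph_eq_if_adj_eq:
  assumes "weighted_graph adj mu" and "\<And>x y. adj x y \<Longrightarrow> v y = v x"
  shows "v a = v b"
proof -
  have "(adj ^^ n) a y \<Longrightarrow> v y = v a" for n y
    by (induction n arbitrary: y) (auto dest: assms(2))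
  then show ?thesis using weighted_graphD(2)[OF assms(1), of a b] by metis
qed

lemma vmeasure_nonneg:
  assumes "weighted_graph adj mu"
  shows "vmeasure adj mu x \<ge> 0"
  unfolding vmeasure_def using weighted_graphD(4)[OF assms] by (intro sum_nonneg) auto

lemma mu_le_vmeasure:
  assumes "weighted_graph adj mu" and "adj x y"
  shows "mu x y \<le> vmeasure adj mu x"
  unfolding vmeasure_def
  by (rule member_le_sum) (use assms weighted_graphD(1,4)[OF assms(1)] in auto)

lemma vmeasure_mult_m_laplacian:
  assumes "weighted_graph adj mu"
  shows "vmeasure adj mu x * m_laplacian adj mu m u x
    = (\<Sum>y\<in>{y. adj x y}. mu x y * \<bar>u y - u x\<bar> powr (m - 2) * (u y - u x))"
proof (cases "{y. adj x y} = {}")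
  case False
  then obtain y where "adj x y" by blast
  then have "vmeasure adj mu x > 0"
    using mu_le_vmeasure[OF assms] weighted_graphD(5)[OF assms] by (meson less_le_trans)
  then show ?thesis unfolding m_laplacian_def by simp
qed (simp add: vmeasure_def)

lemma relpowp_gdist:
  assumes "weighted_graph adj mu"
  shows "(adj ^^ gdist adj x y) x y"
  unfolding gdist_def using weighted_graphD(2)[OF assms] by (rule LeastI_ex)

lemma gdist_le: "(adj ^^ n) x y \<Longrightarrow> gdist adj x y \<le> n"
  unfolding gdist_def by (rule Least_le)

lemma gdist_adj_le:
  assumes "weighted_graph adj mu" and "adj y z"
  shows "gdist adj x z \<le> Suc (gdist adj x y)"
  using relpowp_gdist[OF assms(1), of x y] assms(2) by (intro gdist_le) auto

lemma ball_g_0: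
  assumes "weighted_graph adj mu"
  shows "ball_g adj o' 0 = {o'}"
proof -
  have "x = o'" if "gdist adj o' x = 0" for x
    using relpowp_gdist[OF assms, of o' x] that by simp
  moreover have "gdist adj o' o' = 0" using gdist_le[of 0 adj o' o'] by simp
  ultimately show ?thesis unfolding ball_g_def by auto
qed

lemma ball_g_Suc_subset:
  assumes "weighted_graph adj mu"
  shows "ball_g adj o' (Suc n) \<subseteq> ball_g adj o' n \<union> (\<Union>z\<in>ball_g adj o' n. {y. adj z y})"
proof
  fix x assume x: "x \<in> ball_g adj o' (Suc n)"
  show "x \<in> ball_g adj o' n \<union> (\<Union>z\<in>ball_g adj o' n. {y. adj z y})"
  proof (cases "gdist adj o' x \<le> n")
    case False
    with x have "(adj ^^ Suc n) o' x"
      using relpowp_gdist[OF assms, of o' x] unfolding ball_g_def by (simp add: le_Suc_eq)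
    then obtain z where "(adj ^^ n) o' z" and "adj z x" by auto
    then have "z \<in> ball_g adj o' n" by (simp add: ball_g_def gdist_le)
    with \<open>adj z x\<close> show ?thesis by blast
  qed (simp add: ball_g_def)
qed

lemma finite_ball_g:
  assumes "weighted_graph adj mu"
  shows "finite (ball_g adj o' n)"
proof (induction n)
  case 0
  then show ?case using ball_g_0[OF assms] by simp
next
  case (Suc n)
  show ?case
    by (rule finite_subset[OF ball_g_Suc_subset[OF assms]]) (simp add: Suc weighted_graphD(1)[OF assms])
qed

lemma abs_powr_mult_self:
  fixes t m :: real
  shows "\<bar>t\<bar> powr (m - 2) * t = sgn t * \<bar>t\<bar> powr (m - 1)"
proof (cases "t = 0")
  case False
  have "\<bar>t\<bar> powr (m - 1) = \<bar>t\<bar> powr ((m - 2) + 1)" by simp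
  also have "\<dots> = \<bar>t\<bar> powr (m - 2) * \<bar>t\<bar>" using False by (subst powr_add) simp
  finally show ?thesis using False by (simp add: sgn_if)
qed simp

lemma abs_powr_mult_self_nonneg:
  fixes t m :: real
  assumes "t \<ge> 0"
  shows "\<bar>t\<bar> powr (m - 2) * t = \<bar>t\<bar> powr (m - 1)"
  unfolding abs_powr_mult_self using assms by (cases "t = 0") auto

lemma abs_powr_mult_self_nonpos:
  fixes t m :: real
  assumes "t \<le> 0"
  shows "\<bar>t\<bar> powr (m - 2) * t = - (\<bar>t\<bar> powr (m - 1))"
  unfolding abs_powr_mult_self using assms by (cases "t = 0") auto

lemma abs_powr_mult_self_ge:
  fixes t m :: real
  shows "- (\<bar>t\<bar> powr (m - 1)) \<le> \<bar>t\<bar> powr (m - 2) * t"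
proof (cases "t \<le> 0")
  case True
  then show ?thesis by (simp only: abs_powr_mult_self_nonpos order.refl)
next
  case False
  then show ?thesis by (simp only: abs_powr_mult_self_nonneg) simp
qed

lemma abs_powr_mult_self_mono:
  fixes s t m :: real
  assumes "m \<ge> 1" and "t \<le> s"
  shows "\<bar>t\<bar> powr (m - 2) * t \<le> \<bar>s\<bar> powr (m - 2) * s"
proof -
  consider "0 \<le> t" | "s \<le> 0" | "t \<le> 0" "0 \<le> s" by linarith
  then show ?thesis
  proof cases
    case 1
    then have "\<bar>t\<bar> powr (m - 1) \<le> \<bar>s\<bar> powr (m - 1)" using assms by (intro powr_mono2) auto
    then show ?thesis using 1 assms(2) by (simp only: abs_powr_mult_self_nonneg)
  next
    case 2
    then have "\<bar>s\<bar> powr (m - 1) \<le> \<bar>t\<bar> powr (m - 1)" using assms by (intro powr_mono2) auto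
    then show ?thesis using 2 assms(2) by (simp only: abs_powr_mult_self_nonpos neg_le_iff_le)
  next
    case 3
    have "- (\<bar>t\<bar> powr (m - 1)) \<le> \<bar>s\<bar> powr (m - 1)"
      using powr_ge_zero[of "\<bar>t\<bar>"] powr_ge_zero[of "\<bar>s\<bar>"] by (smt (verit))
    then show ?thesis using 3 by (simp only: abs_powr_mult_self_nonpos abs_powr_mult_self_nonneg)
  qed
qed

lemma sum_neighbours_antisym:
  fixes h :: "'v \<Rightarrow> 'v \<Rightarrow> real"
  assumes "finite B" and fin: "\<And>x. finite {y. adj x y}"
    and antisym: "\<And>x y. h y x = - h x y" and zero: "\<And>x y. \<not> adj x y \<Longrightarrow> h x y = 0"
  shows "(\<Sum>x\<in>B. \<Sum>y\<in>{y. adj x y}. h x y) = (\<Sum>x\<in>B. \<Sum>y\<in>{y. adj x y} - B. h x y)"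
proof -
  have "(\<Sum>x\<in>B. \<Sum>y\<in>B. h x y) = (\<Sum>y\<in>B. \<Sum>x\<in>B. h x y)" by (rule sum.swap)
  also have "\<dots> = (\<Sum>y\<in>B. \<Sum>x\<in>B. - h y x)" by (intro sum.cong refl antisym)
  also have "\<dots> = - (\<Sum>y\<in>B. \<Sum>x\<in>B. h y x)" by (simp add: sum_negf)
  finally have inner: "(\<Sum>x\<in>B. \<Sum>y\<in>B. h x y) = 0" by simp
  have "(\<Sum>y\<in>{y. adj x y}. h x y) = (\<Sum>y\<in>B. h x y) + (\<Sum>y\<in>{y. adj x y} - B. h x y)" for x
  proof -
    have "(\<Sum>y\<in>{y. adj x y} \<inter> B. h x y) = (\<Sum>y\<in>B. h x y)"
      by (rule sum.mono_neutral_left) (use assms(1) fin zero in auto)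
    then show ?thesis using sum.Int_Diff[OF fin, of "h x" x B] by simp
  qed
  then show ?thesis using inner by (simp add: sum.distrib)
qed

definition vertex_energy ::
  "('v \<Rightarrow> 'v \<Rightarrow> bool) \<Rightarrow> ('v \<Rightarrow> 'v \<Rightarrow> real) \<Rightarrow> real \<Rightarrow> ('v \<Rightarrow> real) \<Rightarrow> 'v \<Rightarrow> real" where
  "vertex_energy adj mu m v x = (\<Sum>y\<in>{y. adj x y}. mu x y * \<bar>v y - v x\<bar> powr (m - 1))"

definition ball_energy ::
  "('v \<Rightarrow> 'v \<Rightarrow> bool) \<Rightarrow> ('v \<Rightarrow> 'v \<Rightarrow> real) \<Rightarrow> real \<Rightarrow> ('v \<Rightarrow> real) \<Rightarrow> 'v \<Rightarrow> nat \<Rightarrow> real" where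
  "ball_energy adj mu m v o' n = (\<Sum>x\<in>ball_g adj o' n. vertex_energy adj mu m v x)"

definition boundary_energy ::
  "('v \<Rightarrow> 'v \<Rightarrow> bool) \<Rightarrow> ('v \<Rightarrow> 'v \<Rightarrow> real) \<Rightarrow> real \<Rightarrow> ('v \<Rightarrow> real) \<Rightarrow> 'v \<Rightarrow> nat \<Rightarrow> real" where
  "boundary_energy adj mu m v o' n =
     (\<Sum>x\<in>ball_g adj o' n. \<Sum>y\<in>{y. adj x y} - ball_g adj o' n. mu x y * \<bar>v y - v x\<bar> powr (m - 1))"

lemma vertex_energy_nonneg:
  assumes "weighted_graph adj mu"
  shows "vertex_energy adj mu m v x \<ge> 0"
  unfolding vertex_energy_def using weighted_graphD(4)[OF assms] by (intro sum_nonneg) auto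

lemma vertex_energy_eq_0_imp_adj_eq:
  assumes "weighted_graph adj mu" and "vertex_energy adj mu m v x = 0" and "adj x y"
  shows "v y = v x"
proof -
  have "\<forall>y\<in>{y. adj x y}. mu x y * \<bar>v y - v x\<bar> powr (m - 1) = 0"
    using assms(2) weighted_graphD(1,4)[OF assms(1)] unfolding vertex_energy_def
    by (subst sum_nonneg_eq_0_iff[symmetric]) auto
  then show ?thesis using assms(3) weighted_graphD(5)[OF assms(1), of x y] by auto
qed

lemma ex_vertex_energy_pos:
  assumes "weighted_graph adj mu" and "v a \<noteq> v b"
  obtains x where "vertex_energy adj mu m v x > 0"
proof -
  have "\<exists>x. vertex_energy adj mu m v x \<noteq> 0"
    using weighted_graph_eq_if_adj_eq[OF assms(1)] vertex_energy_eq_0_imp_adj_eq[OF assms(1)] assms(2)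
    by metis
  then obtain x where "vertex_energy adj mu m v x \<noteq> 0" by blast
  with vertex_energy_nonneg[OF assms(1), of m v x] have "vertex_energy adj mu m v x > 0" by linarith
  then show ?thesis by (rule that)
qed

lemma ball_energy_le_boundary_energy:
  assumes "weighted_graph adj mu"
    and super: "\<And>x. (\<Sum>y\<in>{y. adj x y}. mu x y * \<bar>v y - v x\<bar> powr (m - 2) * (v y - v x))
                  \<le> - c * vertex_energy adj mu m v x"
  shows "c * ball_energy adj mu m v o' n \<le> boundary_energy adj mu m v o' n"
proof -
  define B where "B = ball_g adj o' n"
  define h where "h x y = mu x y * \<bar>v y - v x\<bar> powr (m - 2) * (v y - v x)" for x y
  have antisym: "h y x = - h x y" for x y
    unfolding h_def weighted_graphD(3)[OF assms(1), of y x] abs_minus_commute[of "v x"]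
    by (simp add: algebra_simps)
  have "(\<Sum>x\<in>B. \<Sum>y\<in>{y. adj x y}. h x y) = (\<Sum>x\<in>B. \<Sum>y\<in>{y. adj x y} - B. h x y)"
    using finite_ball_g[OF assms(1)] weighted_graphD(1)[OF assms(1)]
    by (intro sum_neighbours_antisym antisym)
      (auto simp: B_def h_def weighted_graph_mu_eq_0[OF assms(1)])
  also have "\<dots> \<ge> (\<Sum>x\<in>B. \<Sum>y\<in>{y. adj x y} - B. - (mu x y * \<bar>v y - v x\<bar> powr (m - 1)))"
    unfolding h_def mult.assoc
    using mult_left_mono[OF abs_powr_mult_self_ge weighted_graphD(4)[OF assms(1)]]
    by (intro sum_mono) simp
  finally have "- boundary_energy adj mu m v o' n \<le> (\<Sum>x\<in>B. \<Sum>y\<in>{y. adj x y}. h x y)"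
    unfolding boundary_energy_def B_def by (simp add: sum_negf)
  also have "\<dots> \<le> (\<Sum>x\<in>B. - c * vertex_energy adj mu m v x)"
    unfolding h_def using super by (intro sum_mono)
  also have "\<dots> = - c * ball_energy adj mu m v o' n"
    unfolding ball_energy_def B_def by (simp add: sum_distrib_left)
  finally show ?thesis by simp
qed

lemma boundary_energy_le_W_o:
  assumes "weighted_graph adj mu" and "m \<ge> 1" and "\<And>x y. \<bar>v x - v y\<bar> \<le> M"
  shows "boundary_energy adj mu m v o' n \<le> M powr (m - 1) * W_o adj mu o' n"
proof -
  define B where "B = ball_g adj o' n"
  define T where "T x = {y. adj x y \<and> gdist adj o' x < gdist adj o' y}" for x
  have "boundary_energy adj mu m v o' n \<le> (\<Sum>x\<in>B. \<Sum>y\<in>{y. adj x y} - B. mu x y * M powr (m - 1))"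
    unfolding boundary_energy_def B_def using assms weighted_graphD(4)[OF assms(1)]
    by (intro sum_mono mult_left_mono powr_mono2) auto
  also have "\<dots> \<le> (\<Sum>x\<in>B. \<Sum>y\<in>T x. mu x y * M powr (m - 1))"
  proof (intro sum_mono sum_mono2)
    fix x assume "x \<in> B"
    then show "{y. adj x y} - B \<subseteq> T x" unfolding T_def B_def ball_g_def by auto
    show "finite (T x)" unfolding T_def using weighted_graphD(1)[OF assms(1), of x] by simp
  qed (simp add: weighted_graphD(4)[OF assms(1)])
  also have "\<dots> = M powr (m - 1) * W_o adj mu o' n"
    unfolding W_o_def T_def B_def by (simp add: sum_distrib_left sum_distrib_right mult.commute)
  finally show ?thesis .
qed

lemma boundary_energy_Suc_le:
  assumes "weighted_graph adj mu"
  shows "boundary_energy adj mu m v o' (Suc n)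
    \<le> ball_energy adj mu m v o' (Suc n) - ball_energy adj mu m v o' n"
proof -
  define B where "B k = ball_g adj o' k" for k
  have finB: "finite (B k)" for k unfolding B_def by (rule finite_ball_g[OF assms])
  have sub: "B n \<subseteq> B (Suc n)" unfolding B_def ball_g_def by auto
  have "boundary_energy adj mu m v o' (Suc n)
      \<le> (\<Sum>x\<in>B (Suc n). if x \<in> B n then 0 else vertex_energy adj mu m v x)"
    unfolding boundary_energy_def B_def[symmetric]
  proof (intro sum_mono)
    fix x assume "x \<in> B (Suc n)"
    show "(\<Sum>y\<in>{y. adj x y} - B (Suc n). mu x y * \<bar>v y - v x\<bar> powr (m - 1))
        \<le> (if x \<in> B n then 0 else vertex_energy adj mu m v x)"
    proof (cases "x \<in> B n")
      case True
      then have "{y. adj x y} - B (Suc n) = {}"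
        using gdist_adj_le[OF assms, of x _ o'] unfolding B_def ball_g_def by fastforce
      then show ?thesis using True by (simp only: sum.empty if_True order.refl)
    next
      case False
      then show ?thesis unfolding vertex_energy_def
        using weighted_graphD(1,4)[OF assms] by (simp add: sum_mono2)
    qed
  qed
  also have "\<dots> = (\<Sum>x\<in>B (Suc n) - B n. vertex_energy adj mu m v x)"
    by (rule sum.mono_neutral_cong_right) (use finB in auto)
  also have "\<dots> = ball_energy adj mu m v o' (Suc n) - ball_energy adj mu m v o' n"
    unfolding ball_energy_def B_def[symmetric]
    using sum.subset_diff[OF sub finB, of "vertex_energy adj mu m v"] by simp
  finally show ?thesis .
qed

lemma geometric_growth:
  fixes A :: "nat \<Rightarrow> real"
  assumes "c < 1" and step: "\<And>n. c * A (Suc n) \<le> A (Suc n) - A n"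
  shows "(1 / (1 - c)) ^ k * A n0 \<le> A (n0 + k)"
proof (induction k)
  case (Suc k)
  have "A (n0 + k) \<le> (1 - c) * A (n0 + Suc k)"
    using step[of "n0 + k"] by (simp add: algebra_simps)
  then have "1 / (1 - c) * A (n0 + k) \<le> A (n0 + Suc k)"
    using assms(1) by (simp add: field_simps)
  moreover have "(1 / (1 - c)) ^ Suc k * A n0 \<le> 1 / (1 - c) * A (n0 + k)"
    using Suc assms(1) by (simp add: divide_right_mono)
  ultimately show ?case by linarith
qed simp

lemma exists_power_gt_polynomial:
  fixes r a D \<alpha> :: real and n0 N :: nat
  assumes "r > 1" and "a > 0"
  obtains k where "k \<ge> N" and "D * real (n0 + k) powr \<alpha> < a * r ^ k"
proof -
  have "eventually (\<lambda>k. D * real (n0 + k) powr \<alpha> < a * r ^ k) at_top"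
    using assms by real_asymp
  then show ?thesis using that unfolding eventually_at_top_linorder
    by (meson le_add1 le_add2 order_trans)
qed

theorem W_o_superpolynomial:
  assumes "weighted_graph adj mu" and "m \<ge> 1" and "0 < c" and "c < 1"
    and "\<And>x y. \<bar>v x - v y\<bar> \<le> M" and "v a \<noteq> v b"
    and super: "\<And>x. (\<Sum>y\<in>{y. adj x y}. mu x y * \<bar>v y - v x\<bar> powr (m - 2) * (v y - v x))
                  \<le> - c * vertex_energy adj mu m v x"
  obtains n where "n \<ge> n1" and "W_o adj mu o' n > C * real n powr \<alpha>"
proof -
  let ?A = "ball_energy adj mu m v o'"
  obtain x0 where x0: "vertex_energy adj mu m v x0 > 0"
    using ex_vertex_energy_pos[OF assms(1,6)] .
  define n0 where "n0 = gdist adj o' x0"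
  have "x0 \<in> ball_g adj o' n0" unfolding ball_g_def n0_def by simp
  then have "?A n0 > 0" unfolding ball_energy_def using x0 finite_ball_g[OF assms(1)]
    by (metis member_le_sum vertex_energy_nonneg[OF assms(1)] less_le_trans)
  moreover have "1 / (1 - c) > 1" using assms(3,4) by simp
  ultimately obtain k where "k \<ge> n1"
    and gt: "M powr (m - 1) * C * real (n0 + k) powr \<alpha> < c * ?A n0 * (1 / (1 - c)) ^ k"
    using exists_power_gt_polynomial[of "1 / (1 - c)" "c * ?A n0" n1 "M powr (m - 1) * C" n0 \<alpha>]
      assms(3) by auto
  have "c * ?A (Suc n) \<le> ?A (Suc n) - ?A n" for n
    using ball_energy_le_boundary_energy[OF assms(1) super] boundary_energy_Suc_le[OF assms(1)]
    by (rule order_trans)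
  then have "(1 / (1 - c)) ^ k * ?A n0 \<le> ?A (n0 + k)"
    by (rule geometric_growth[OF assms(4)])
  then have "c * ?A n0 * (1 / (1 - c)) ^ k \<le> c * ?A (n0 + k)"
    using assms(3) by (simp add: mult_left_mono mult.commute mult.left_commute)
  also have "\<dots> \<le> M powr (m - 1) * W_o adj mu o' (n0 + k)"
    using ball_energy_le_boundary_energy[OF assms(1) super]
      boundary_energy_le_W_o[OF assms(1,2,5)] by (rule order_trans)
  finally have "M powr (m - 1) * (C * real (n0 + k) powr \<alpha>) < M powr (m - 1) * W_o adj mu o' (n0 + k)"
    using gt by (simp add: mult.assoc)
  then have "C * real (n0 + k) powr \<alpha> < W_o adj mu o' (n0 + k)"
    by (rule mult_left_less_imp_less) simp
  moreover have "n0 + k \<ge> n1" using \<open>k \<ge> n1\<close> by simp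
  ultimately show ?thesis by (intro that)
qed

lemma grad_norm_nonneg:
  assumes "weighted_graph adj mu"
  shows "grad_norm adj mu u x \<ge> 0"
  unfolding grad_norm_def using weighted_graphD(4)[OF assms] vmeasure_nonneg[OF assms]
  by (intro real_sqrt_ge_zero sum_nonneg mult_nonneg_nonneg divide_nonneg_nonneg) auto

lemma grad_norm_ge_abs_diff:
  assumes wg: "weighted_graph adj mu" and "cond_p0 adj mu p0" and "adj x y"
  shows "sqrt (1 / (2 * p0)) * \<bar>u y - u x\<bar> \<le> grad_norm adj mu u x"
proof -
  have "1 / p0 \<le> mu x y / vmeasure adj mu x"
    using assms(2,3) unfolding cond_p0_def by blast
  then have "1 / (2 * p0) \<le> mu x y / (2 * vmeasure adj mu x)"
    unfolding mult.commute[of 2 p0] mult.commute[of 2 "vmeasure adj mu x"] divide_divide_eq_left[symmetric]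
    by (rule divide_right_mono) simp
  then have "1 / (2 * p0) * (u y - u x)\<^sup>2 \<le> mu x y / (2 * vmeasure adj mu x) * (u y - u x)\<^sup>2"
    by (rule mult_right_mono) simp_all
  also have "\<dots> \<le> (\<Sum>z\<in>{y. adj x y}. mu x z / (2 * vmeasure adj mu x) * (u z - u x)\<^sup>2)"
    using assms(3) weighted_graphD(1,4)[OF wg] vmeasure_nonneg[OF wg]
    by (intro member_le_sum) auto
  finally have "sqrt (1 / (2 * p0) * (u y - u x)\<^sup>2) \<le> grad_norm adj mu u x"
    unfolding grad_norm_def by (rule real_sqrt_le_mono)
  then show ?thesis by (simp only: real_sqrt_mult real_sqrt_abs)
qed

lemma flux_at_maximum:
  assumes wg: "weighted_graph adj mu" and "c \<le> 1" and max: "\<And>y. v y \<le> v x"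
  shows "(\<Sum>y\<in>{y. adj x y}. mu x y * \<bar>v y - v x\<bar> powr (m - 2) * (v y - v x))
    \<le> - c * vertex_energy adj mu m v x"
proof -
  have "(\<Sum>y\<in>{y. adj x y}. mu x y * \<bar>v y - v x\<bar> powr (m - 2) * (v y - v x))
      = - vertex_energy adj mu m v x"
    unfolding vertex_energy_def sum_negf[symmetric]
  proof (intro sum.cong refl)
    fix y
    have "v y - v x \<le> 0" using max[of y] by simp
    then show "mu x y * \<bar>v y - v x\<bar> powr (m - 2) * (v y - v x) = - (mu x y * \<bar>v y - v x\<bar> powr (m - 1))"
      by (simp only: mult.assoc abs_powr_mult_self_nonpos mult_minus_right)
  qed
  moreover have "0 \<le> (1 - c) * vertex_energy adj mu m v x"
    using assms(2) vertex_energy_nonneg[OF wg] by simp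
  then have "c * vertex_energy adj mu m v x \<le> vertex_energy adj mu m v x"
    by (simp add: left_diff_distrib)
  ultimately show ?thesis by linarith
qed

lemma truncation_supersolution:
  fixes u :: "'v \<Rightarrow> real"
  assumes wg: "weighted_graph adj mu" and p0: "cond_p0 adj mu p0" and "m \<ge> 1" and "p \<le> 0"
    and pos: "\<And>x. u x > 0"
    and super: "\<And>x. m_laplacian adj mu m u x + u x powr p * grad_norm adj mu u x powr (m - 1) \<le> 0"
    and "0 \<le> c" and "c \<le> 1" and c_le: "c \<le> M powr p * sqrt (1 / (2 * p0)) powr (m - 1)"
  defines "v \<equiv> \<lambda>x. min (u x) M"
  shows "(\<Sum>y\<in>{y. adj x y}. mu x y * \<bar>v y - v x\<bar> powr (m - 2) * (v y - v x))
    \<le> - c * vertex_energy adj mu m v x"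
proof (cases "u x \<le> M")
  case False
  then have "v y \<le> v x" for y unfolding v_def by simp
  then show ?thesis by (rule flux_at_maximum[OF wg \<open>c \<le> 1\<close>])
next
  case True
  define s where "s = sqrt (1 / (2 * p0))"
  define g where "g = grad_norm adj mu u x"
  define vm where "vm = vmeasure adj mu x"
  have "s > 0" using p0 unfolding s_def cond_p0_def by simp
  have "vm \<ge> 0" unfolding vm_def by (rule vmeasure_nonneg[OF wg])
  have "g \<ge> 0" unfolding g_def by (rule grad_norm_nonneg[OF wg])
  have vx: "v x = u x" using True unfolding v_def by simp
  have "(\<Sum>y\<in>{y. adj x y}. mu x y * \<bar>v y - v x\<bar> powr (m - 2) * (v y - v x))
      \<le> (\<Sum>y\<in>{y. adj x y}. mu x y * \<bar>u y - u x\<bar> powr (m - 2) * (u y - u x))"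
  proof (rule sum_mono)
    fix y
    have "v y - v x \<le> u y - u x" using vx unfolding v_def by simp
    then have "\<bar>v y - v x\<bar> powr (m - 2) * (v y - v x) \<le> \<bar>u y - u x\<bar> powr (m - 2) * (u y - u x)"
      by (rule abs_powr_mult_self_mono[OF \<open>m \<ge> 1\<close>])
    then show "mu x y * \<bar>v y - v x\<bar> powr (m - 2) * (v y - v x)
        \<le> mu x y * \<bar>u y - u x\<bar> powr (m - 2) * (u y - u x)"
      unfolding mult.assoc by (rule mult_left_mono) (simp add: weighted_graphD(4)[OF wg])
  qed
  also have "\<dots> = vm * m_laplacian adj mu m u x"
    unfolding vm_def by (rule vmeasure_mult_m_laplacian[OF wg, symmetric])
  also have "\<dots> \<le> vm * - (u x powr p * g powr (m - 1))"
    using super[of x] \<open>vm \<ge> 0\<close> unfolding g_def by (intro mult_left_mono) auto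
  finally have flux: "(\<Sum>y\<in>{y. adj x y}. mu x y * \<bar>v y - v x\<bar> powr (m - 2) * (v y - v x))
      \<le> vm * - (u x powr p * g powr (m - 1))" .
  have "vertex_energy adj mu m v x \<le> (\<Sum>y\<in>{y. adj x y}. mu x y * (g / s) powr (m - 1))"
    unfolding vertex_energy_def
  proof (intro sum_mono mult_left_mono)
    fix y assume "y \<in> {y. adj x y}"
    then have "s * \<bar>u y - u x\<bar> \<le> g"
      unfolding s_def g_def using grad_norm_ge_abs_diff[OF wg p0] by simp
    then have "\<bar>u y - u x\<bar> \<le> g / s" using \<open>s > 0\<close> by (simp add: pos_le_divide_eq mult.commute)
    moreover have "\<bar>v y - v x\<bar> \<le> \<bar>u y - u x\<bar>" using vx True unfolding v_def by auto
    ultimately have "\<bar>v y - v x\<bar> \<le> g / s" by linarith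
    then show "\<bar>v y - v x\<bar> powr (m - 1) \<le> (g / s) powr (m - 1)"
      using \<open>m \<ge> 1\<close> by (intro powr_mono2) auto
  qed (simp add: weighted_graphD(4)[OF wg])
  also have "\<dots> = vm * (g powr (m - 1) / s powr (m - 1))"
    unfolding vm_def vmeasure_def using \<open>s > 0\<close> \<open>g \<ge> 0\<close>
    by (simp add: sum_distrib_right sum_divide_distrib powr_divide)
  finally have energy: "vertex_energy adj mu m v x \<le> vm * (g powr (m - 1) / s powr (m - 1))" .
  have "M powr p \<le> u x powr p" using \<open>p \<le> 0\<close> pos[of x] True by (intro powr_mono2') auto
  then have "c \<le> u x powr p * s powr (m - 1)"
    using c_le mult_right_mono[of "M powr p" "u x powr p" "s powr (m - 1)"] unfolding s_def by simp
  then have c_div: "c / s powr (m - 1) \<le> u x powr p"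
    using \<open>s > 0\<close> by (simp add: divide_le_eq)
  have "c * vertex_energy adj mu m v x \<le> c * (vm * (g powr (m - 1) / s powr (m - 1)))"
    using energy \<open>0 \<le> c\<close> by (rule mult_left_mono)
  also have "\<dots> = vm * g powr (m - 1) * (c / s powr (m - 1))" by simp
  also have "\<dots> \<le> vm * g powr (m - 1) * u x powr p"
    using c_div \<open>vm \<ge> 0\<close> by (intro mult_left_mono) simp_all
  finally show ?thesis using flux by (simp add: mult_ac)
qed

lemma nontrivial_pos_solutionD:
  assumes "nontrivial_pos_solution adj mu m p q u" and "q > 0"
  shows "u x > 0" and "\<exists>a b. u a \<noteq> u b"
    and "m_laplacian adj mu m u x + u x powr p * grad_norm adj mu u x powr q \<le> 0"
proof -
  show "u x > 0" and "\<exists>a b. u a \<noteq> u b"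
    using assms(1) unfolding nontrivial_pos_solution_def by auto
  let ?g = "grad_norm adj mu u x"
  have "m_laplacian adj mu m u x + u x powr p * (if ?g = 0 then (if q = 0 then 1 else 0) else ?g powr q) \<le> 0"
    using assms(1) unfolding nontrivial_pos_solution_def Let_def by blast
  then show "m_laplacian adj mu m u x + u x powr p * ?g powr q \<le> 0"
    using assms(2) by (cases "?g = 0") auto
qed

theorem theorem1p1:
  fixes adj :: "'v \<Rightarrow> 'v \<Rightarrow> bool" and mu :: "'v \<Rightarrow> 'v \<Rightarrow> real"
    and m p q p0 \<alpha> C :: real and n1 :: nat and o' :: 'v
  assumes "weighted_graph adj mu"
    and "cond_p0 adj mu p0"
    and "m > 1"
    and "p < 0" and "q = m - 1"
    and "\<alpha> > 0" and "C > 0"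
    and "\<forall>n\<ge>n1. W_o adj mu o' n \<le> C * real n powr \<alpha>"
  shows "\<not> (\<exists>u. nontrivial_pos_solution adj mu m p q u)"
proof
  assume "\<exists>u. nontrivial_pos_solution adj mu m p q u"
  then obtain u where sol: "nontrivial_pos_solution adj mu m p q u" ..
  have "q > 0" using assms(3,5) by simp
  obtain a b where "u a \<noteq> u b" using nontrivial_pos_solutionD(2)[OF sol \<open>q > 0\<close>] by blast
  have pos: "\<And>x. u x > 0"
    and super: "\<And>x. m_laplacian adj mu m u x + u x powr p * grad_norm adj mu u x powr (m - 1) \<le> 0"
    using nontrivial_pos_solutionD(1,3)[OF sol \<open>q > 0\<close>] assms(5) by auto
  define M where "M = max (u a) (u b)"
  define c where "c = min (1 / 2) (M powr p * sqrt (1 / (2 * p0)) powr (m - 1))"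
  have "M > 0" using pos[of a] unfolding M_def by simp
  then have c: "0 < c" "c < 1" "c \<le> M powr p * sqrt (1 / (2 * p0)) powr (m - 1)"
    using assms(2) unfolding c_def cond_p0_def by simp_all
  have "m \<ge> 1" using assms(3) by simp
  let ?v = "\<lambda>x. min (u x) M"
  have "\<bar>?v x - ?v y\<bar> \<le> M" for x y
    using pos[of x] pos[of y] \<open>M > 0\<close> by (simp add: abs_le_iff min_def)
  moreover have "?v a \<noteq> ?v b" using \<open>u a \<noteq> u b\<close> unfolding M_def by auto
  moreover have "(\<Sum>y\<in>{y. adj x y}. mu x y * \<bar>?v y - ?v x\<bar> powr (m - 2) * (?v y - ?v x))
      \<le> - c * vertex_energy adj mu m ?v x" for x
    by (rule truncation_supersolution[OF assms(1,2) \<open>m \<ge> 1\<close> _ pos super]) (use assms(4) c in simp_all)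
  ultimately obtain n where "n \<ge> n1" and "W_o adj mu o' n > C * real n powr \<alpha>"
    by (rule W_o_superpolynomial[OF assms(1) \<open>m \<ge> 1\<close> c(1,2)])
  with assms(8) show False by fastforce
qed

end
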